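(* Let $X$ be a complex Banach space with a Schauder decomposition $\mathcal{D}=\{X_n:n\ge1\}$, let $K=\sup_{N\ge1}\|P_N\|$ and $Q_N=I_X-P_N$. Let $(a_n)_{n\ge1}$ be a nondecreasing sequence in $(0,\infty)$ with $\lim_na_n=\infty$, and let $A^{-1}\in B(X)$ be given by $A^{-1}x=\sum_{n\ge1}a_n^{-1}p_n(x)$. Then for every $t>0$ and $N\ge1$, $$\|e^{-tA^{-1}}-Q_N\|\le2(1+K)\big(e^{-t/a_N}+1-e^{-t/a_{N+1}}\big).$$ In particular, for $a_n=(n!)^3$ and $t_N=N(N!)^3$ one has $\sum_{N\ge1}\|e^{-t_NA^{-1}}-Q_N\|<\infty$.
   Context: A Schauder decomposition of $X$ is a sequence $\mathcal{D}=\{X_n:n\ge1\}$ of closed subspaces such that every $x\in X$ has a unique expansion $x=\sum_nx_n$ with $x_n\in X_n$; $p_n(x)=x_n$ and $P_N=\sum_{n=1}^Np_n$; the set $\{P_N\}$ is bounded. Here $A^{-1}$ is the inverse of the sectorial operator $Ax=\sum_na_np_n(x)$, $D(A)=\{x:\sum_na_np_n(x)\text{ converges}\}$, and $e^{-tA^{-1}}$ is the exponential of the bounded operator $-tA^{-1}$ (equal to $x\mapsto\sum_ne^{-t/a_n}p_n(x)$). *)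

theory Defs
  imports "HOL-Analysis.Analysis"
begin

class complex_banach = banach +
  fixes scaleC :: "complex \<Rightarrow> 'a \<Rightarrow> 'a" (infixr \<open>*\<^sub>C\<close> 75)
  assumes scaleC_add_right: "c *\<^sub>C (x + y) = c *\<^sub>C x + c *\<^sub>C y"
    and scaleC_add_left: "(b + c) *\<^sub>C x = b *\<^sub>C x + c *\<^sub>C x"
    and scaleC_scaleC: "b *\<^sub>C (c *\<^sub>C x) = (b * c) *\<^sub>C x"
    and scaleC_one: "1 *\<^sub>C x = x"
    and scaleC_of_real: "complex_of_real r *\<^sub>C x = r *\<^sub>R x"
    and norm_scaleC: "norm (c *\<^sub>C x) = cmod c * norm x"

definition csubspace :: "'a::complex_banach set \<Rightarrow> bool" where
  "csubspace S \<longleftrightarrow> 0 \<in> S \<and> (\<forall>x\<in>S. \<forall>y\<in>S. x + y \<in> S) \<and> (\<forall>c::complex. \<forall>x\<in>S. c *\<^sub>C x \<in> S)"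

definition is_expansion :: "(nat \<Rightarrow> 'a::complex_banach set) \<Rightarrow> 'a \<Rightarrow> (nat \<Rightarrow> 'a) \<Rightarrow> bool" where
  "is_expansion Xs x u \<longleftrightarrow> (\<forall>n\<ge>1. u n \<in> Xs n) \<and> u 0 = 0 \<and> (\<lambda>N. \<Sum>n\<in>{1..N}. u n) \<longlonglongrightarrow> x"

definition coord :: "(nat \<Rightarrow> 'a::complex_banach set) \<Rightarrow> nat \<Rightarrow> 'a \<Rightarrow> 'a" where
  "coord Xs n x = (THE u. is_expansion Xs x u) n"

definition psum_proj :: "(nat \<Rightarrow> 'a::complex_banach set) \<Rightarrow> nat \<Rightarrow> 'a \<Rightarrow> 'a" where
  "psum_proj Xs N x = (\<Sum>n\<in>{1..N}. coord Xs n x)"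

definition schauder_decomposition :: "(nat \<Rightarrow> 'a::complex_banach set) \<Rightarrow> bool" where
  "schauder_decomposition Xs \<longleftrightarrow>
     (\<forall>n\<ge>1. csubspace (Xs n) \<and> closed (Xs n)) \<and>
     (\<forall>x. \<exists>!u. is_expansion Xs x u) \<and>
     (\<exists>C. \<forall>N\<ge>1. \<forall>x. norm (psum_proj Xs N x) \<le> C * norm x)"

definition op_exp :: "('a::real_normed_vector \<Rightarrow> 'a) \<Rightarrow> 'a \<Rightarrow> 'a" where
  "op_exp T x = (\<Sum>k. (1 / fact k) *\<^sub>R (T ^^ k) x)"

end

theory Submission
  imports Defs
begin

text \<open>On the summand \<open>X n\<close> the operator \<open>exp (-t A\<^sup>-\<^sup>1) - Q N\<close> acts as multiplication by
  \<open>c n = exp (-t / a n) - [N < n]\<close>. Summation by parts writes such a multiplier, applied to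
  \<open>P M x\<close>, as a combination of the \<open>P n x\<close> with coefficients \<open>c M\<close> and the increments of \<open>c\<close>,
  so its norm is at most \<open>K\<close> times the total variation of \<open>c\<close>. As \<open>exp (-t / a n)\<close> increases
  in \<open>n\<close> with values in \<open>(0, 1]\<close>, this variation is bounded by twice the size of the jump of
  \<open>c\<close> at \<open>N\<close>.\<close>

definition schauder_const :: "(nat \<Rightarrow> 'a::complex_banach set) \<Rightarrow> real" where
  "schauder_const Xs = (SUP M\<in>{1..}. onorm (psum_proj Xs M))"

lemma bounded_linear_funpow:
  "bounded_linear (T :: 'a::real_normed_vector \<Rightarrow> 'a) \<Longrightarrow> bounded_linear (T ^^ k)"
  by (induction k) (auto simp: id_def o_def intro: bounded_linear_ident bounded_linear_compose)

lemma norm_funpow_le: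
  assumes "bounded_linear (T :: 'a::real_normed_vector \<Rightarrow> 'a)"
  shows "norm ((T ^^ k) x) \<le> onorm T ^ k * norm x"
proof (induction k)
  case (Suc k)
  have "norm ((T ^^ Suc k) x) \<le> onorm T * norm ((T ^^ k) x)"
    using onorm[OF assms] by simp
  also have "\<dots> \<le> onorm T * (onorm T ^ k * norm x)"
    using Suc onorm_pos_le[OF assms] by (rule mult_left_mono)
  finally show ?case by (simp add: mult.assoc)
qed simp

context
  fixes T :: "'a::banach \<Rightarrow> 'a"
  assumes T: "bounded_linear T"
begin

lemma exp_series_norm_bound_sums:
  "(\<lambda>k. onorm T ^ k / fact k * norm x) sums (exp (onorm T) * norm x)"
  using sums_mult2[OF exp_converges[of "onorm T"], of "norm x"]
  by (simp add: divide_inverse_commute)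

lemma norm_op_exp_term_le:
  "norm ((1 / fact k) *\<^sub>R (T ^^ k) x) \<le> onorm T ^ k / fact k * norm x"
  using norm_funpow_le[OF T, of k x] by (simp add: divide_right_mono)

lemma summable_norm_op_exp_terms: "summable (\<lambda>k. norm ((1 / fact k) *\<^sub>R (T ^^ k) x))"
  by (rule summable_comparison_test'[OF sums_summable[OF exp_series_norm_bound_sums]])
     (use norm_op_exp_term_le in simp)

lemma bounded_linear_op_exp: "bounded_linear (op_exp T)"
proof (rule bounded_linear_intro[where K = "exp (onorm T)"])
  note summable = summable_norm_cancel[OF summable_norm_op_exp_terms]
  note linear = linear_add[OF bounded_linear.linear[OF bounded_linear_funpow[OF T]]]
    linear_cmul[OF bounded_linear.linear[OF bounded_linear_funpow[OF T]]]
  show "op_exp T (x + y) = op_exp T x + op_exp T y" for x y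
    unfolding op_exp_def linear scaleR_add_right by (rule suminf_add[OF summable summable, symmetric])
  show "op_exp T (r *\<^sub>R x) = r *\<^sub>R op_exp T x" for r x
  proof -
    have "op_exp T (r *\<^sub>R x) = (\<Sum>k. r *\<^sub>R ((1 / fact k) *\<^sub>R (T ^^ k) x))"
      unfolding op_exp_def linear by (simp add: mult.commute)
    then show ?thesis unfolding op_exp_def by (simp add: suminf_scaleR_right[OF summable])
  qed
  show "norm (op_exp T x) \<le> norm x * exp (onorm T)" for x
  proof -
    have "norm (op_exp T x) \<le> (\<Sum>k. norm ((1 / fact k) *\<^sub>R (T ^^ k) x))"
      unfolding op_exp_def by (rule summable_norm[OF summable_norm_op_exp_terms])
    also have "\<dots> \<le> (\<Sum>k. onorm T ^ k / fact k * norm x)"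
      by (rule suminf_le[OF norm_op_exp_term_le summable_norm_op_exp_terms
            sums_summable[OF exp_series_norm_bound_sums]])
    also have "\<dots> = exp (onorm T) * norm x"
      using exp_series_norm_bound_sums by (rule sums_unique[symmetric])
    finally show ?thesis by (simp add: mult.commute)
  qed
qed

lemma op_exp_eigenvector:
  assumes "T y = c *\<^sub>R y"
  shows "op_exp T y = exp c *\<^sub>R y"
proof -
  have "(T ^^ k) y = c ^ k *\<^sub>R y" for k
    by (induction k) (simp_all add: assms linear_cmul[OF bounded_linear.linear[OF T]])
  moreover have "(\<lambda>k. (c ^ k /\<^sub>R fact k) *\<^sub>R y) sums (exp c *\<^sub>R y)"
    by (rule sums_scaleR_left[OF exp_converges])
  ultimately show ?thesis
    unfolding op_exp_def by (simp add: sums_iff divide_inverse_commute)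
qed

end

lemma sum_by_parts:
  fixes S :: "nat \<Rightarrow> 'a::real_vector"
  shows "(\<Sum>n<M. c (Suc n) *\<^sub>R (S (Suc n) - S n))
           = c M *\<^sub>R S M - c 0 *\<^sub>R S 0 - (\<Sum>n<M. (c (Suc n) - c n) *\<^sub>R S n)"
  by (induction M) (simp_all add: algebra_simps)

lemma norm_sum_by_parts_le:
  fixes S :: "nat \<Rightarrow> 'a::real_normed_vector"
  assumes "S 0 = 0" and S: "\<And>n. norm (S n) \<le> B"
  shows "norm (\<Sum>n<M. c (Suc n) *\<^sub>R (S (Suc n) - S n))
           \<le> (\<bar>c M\<bar> + (\<Sum>n\<in>{1..<M}. \<bar>c (Suc n) - c n\<bar>)) * B"
proof -
  have "(\<Sum>n<M. (c (Suc n) - c n) *\<^sub>R S n) = (\<Sum>n\<in>{1..<M}. (c (Suc n) - c n) *\<^sub>R S n)"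
    using assms(1) by (simp add: lessThan_atLeast0 sum_shift_lb_Suc0_0_upt)
  then have "norm (\<Sum>n<M. c (Suc n) *\<^sub>R (S (Suc n) - S n))
      = norm (c M *\<^sub>R S M - (\<Sum>n\<in>{1..<M}. (c (Suc n) - c n) *\<^sub>R S n))"
    unfolding sum_by_parts assms(1) by simp
  also have "\<dots> \<le> norm (c M *\<^sub>R S M) + (\<Sum>n\<in>{1..<M}. norm ((c (Suc n) - c n) *\<^sub>R S n))"
    by (intro norm_triangle_le_diff add_left_mono norm_sum)
  also have "\<dots> \<le> \<bar>c M\<bar> * B + (\<Sum>n\<in>{1..<M}. \<bar>c (Suc n) - c n\<bar> * B)"
    using S by (intro add_mono sum_mono) (simp_all add: mult_left_mono)
  finally show ?thesis by (simp add: distrib_right sum_distrib_right)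
qed

lemma variation_of_step_down_le:
  fixes e c :: "nat \<Rightarrow> real"
  assumes e_mono: "\<And>n. n \<ge> 1 \<Longrightarrow> e n \<le> e (Suc n)"
    and e_range: "\<And>n. n \<ge> 1 \<Longrightarrow> 0 \<le> e n \<and> e n \<le> 1"
    and c_def: "\<And>n. c n = e n - (if N < n then 1 else 0)"
    and N: "1 \<le> N" "N < M"
  shows "\<bar>c M\<bar> + (\<Sum>n\<in>{1..<M}. \<bar>c (Suc n) - c n\<bar>) \<le> 2 * (e N + 1 - e (Suc N))"
proof -
  have increment: "\<bar>c (Suc n) - c n\<bar>
      = (e (Suc n) - e n) + (if n = N then 1 - 2 * (e (Suc N) - e N) else 0)" if "n \<ge> 1" for n
  proof (cases "n = N")
    case True
    then show ?thesis
      using c_def e_mono[OF that] e_range[OF that] e_range[of "Suc n"] by auto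
  next
    case False
    then have "(N < Suc n) = (N < n)" by auto
    then show ?thesis using False c_def e_mono[OF that] by auto
  qed
  have "(\<Sum>n\<in>{1..<M}. \<bar>c (Suc n) - c n\<bar>)
      = (\<Sum>n\<in>{1..<M}. (e (Suc n) - e n) + (if n = N then 1 - 2 * (e (Suc N) - e N) else 0))"
    by (rule sum.cong) (simp_all add: increment)
  also have "\<dots> = e M - e 1 + (1 - 2 * (e (Suc N) - e N))"
    using N by (simp add: sum.distrib sum_Suc_diff')
  finally show ?thesis
    using N c_def e_range[of 1] e_range[of M] by auto
qed

locale schauder =
  fixes Xs :: "nat \<Rightarrow> 'a::complex_banach set"
  assumes decomp: "schauder_decomposition Xs"
begin

lemma csubspace_component: "n \<ge> 1 \<Longrightarrow> csubspace (Xs n)"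
  using decomp unfolding schauder_decomposition_def by blast

lemma is_expansion_coord: "is_expansion Xs x (\<lambda>n. coord Xs n x)"
proof -
  have "\<exists>!u. is_expansion Xs x u"
    using decomp unfolding schauder_decomposition_def by blast
  from theI'[OF this] show ?thesis unfolding coord_def by simp
qed

lemma coord_eq_expansion: "is_expansion Xs x u \<Longrightarrow> coord Xs n x = u n"
  using decomp is_expansion_coord unfolding schauder_decomposition_def by metis

lemma coord_in_component: "n \<ge> 1 \<Longrightarrow> coord Xs n x \<in> Xs n"
  using is_expansion_coord unfolding is_expansion_def by blast

lemma coord_0 [simp]: "coord Xs 0 x = 0"
  using is_expansion_coord unfolding is_expansion_def by blast

lemma psum_proj_tendsto: "(\<lambda>N. psum_proj Xs N x) \<longlonglongrightarrow> x"
  using is_expansion_coord unfolding is_expansion_def psum_proj_def by blast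

lemma coord_add: "coord Xs n (x + y) = coord Xs n x + coord Xs n y"
proof (rule coord_eq_expansion)
  have "(\<lambda>N. psum_proj Xs N x + psum_proj Xs N y) \<longlonglongrightarrow> x + y"
    by (intro tendsto_add psum_proj_tendsto)
  then show "is_expansion Xs (x + y) (\<lambda>n. coord Xs n x + coord Xs n y)"
    using csubspace_component coord_in_component
    by (auto simp: is_expansion_def csubspace_def psum_proj_def sum.distrib)
qed

lemma coord_scaleR: "coord Xs n (r *\<^sub>R x) = r *\<^sub>R coord Xs n x"
proof (rule coord_eq_expansion)
  have "(\<lambda>N. r *\<^sub>R psum_proj Xs N x) \<longlonglongrightarrow> r *\<^sub>R x"
    by (intro tendsto_scaleR tendsto_const psum_proj_tendsto)
  moreover have "r *\<^sub>R coord Xs n x \<in> Xs n" if "n \<ge> 1" for n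
    using csubspace_component[OF that] coord_in_component[OF that]
    unfolding csubspace_def by (metis scaleC_of_real)
  ultimately show "is_expansion Xs (r *\<^sub>R x) (\<lambda>n. r *\<^sub>R coord Xs n x)"
    by (auto simp: is_expansion_def psum_proj_def scaleR_sum_right)
qed

lemma coord_of_mem:
  assumes "n \<ge> 1" and "y \<in> Xs n"
  shows "coord Xs m y = (if m = n then y else 0)"
proof (rule coord_eq_expansion)
  have "\<forall>\<^sub>F N in sequentially. (\<Sum>m\<in>{1..N}. if m = n then y else 0) = y"
    using eventually_ge_at_top[of n] by eventually_elim (use assms in auto)
  then show "is_expansion Xs y (\<lambda>m. if m = n then y else 0)"
    using assms csubspace_component unfolding is_expansion_def csubspace_def
    by (auto intro: tendsto_eventually)
qed

lemma psum_proj_of_mem: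
  "n \<ge> 1 \<Longrightarrow> y \<in> Xs n \<Longrightarrow> psum_proj Xs N y = (if n \<le> N then y else 0)"
  by (simp add: psum_proj_def coord_of_mem)

lemma psum_proj_uniform_bound:
  obtains C where "C \<ge> 0" "\<And>N x. norm (psum_proj Xs N x) \<le> C * norm x"
proof -
  obtain C where C: "\<forall>N\<ge>1. \<forall>x. norm (psum_proj Xs N x) \<le> C * norm x"
    using decomp unfolding schauder_decomposition_def by blast
  have "norm (psum_proj Xs N x) \<le> max C 0 * norm x" for N x
  proof (cases "N \<ge> 1")
    case True
    then show ?thesis
      using C by (meson max.cobounded1 mult_right_mono norm_ge_zero order_trans)
  qed (simp add: psum_proj_def)
  then show ?thesis using that[of "max C 0"] by simp
qed

lemma bounded_linear_psum_proj: "bounded_linear (psum_proj Xs N)"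
proof -
  obtain C where "\<And>N x. norm (psum_proj Xs N x) \<le> C * norm x"
    using psum_proj_uniform_bound by blast
  then show ?thesis
    by (intro bounded_linear_intro[where K = C])
       (auto simp: psum_proj_def coord_add coord_scaleR sum.distrib scaleR_sum_right mult.commute)
qed

lemma onorm_psum_proj_le_schauder_const: "onorm (psum_proj Xs M) \<le> schauder_const Xs"
proof -
  obtain C where "C \<ge> 0" "\<And>N x. norm (psum_proj Xs N x) \<le> C * norm x"
    using psum_proj_uniform_bound by blast
  then have bdd: "bdd_above ((\<lambda>M. onorm (psum_proj Xs M)) ` {1..})"
    by (auto intro!: bdd_aboveI onorm_bound)
  show ?thesis
  proof (cases "M \<ge> 1")
    case True
    then show ?thesis unfolding schauder_const_def using bdd by (auto intro: cSUP_upper)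
  next
    case False
    then have "psum_proj Xs M = (\<lambda>x. 0)"
      by (simp add: psum_proj_def fun_eq_iff)
    then have "onorm (psum_proj Xs M) = 0"
      by (simp add: onorm_zero)
    also have "\<dots> \<le> schauder_const Xs"
      unfolding schauder_const_def using bdd onorm_pos_le[OF bounded_linear_psum_proj]
      by (auto intro: cSUP_upper2)
    finally show ?thesis .
  qed
qed

lemma norm_psum_proj_le: "norm (psum_proj Xs M x) \<le> schauder_const Xs * norm x"
  using onorm[OF bounded_linear_psum_proj] onorm_psum_proj_le_schauder_const
  by (meson mult_right_mono norm_ge_zero order_trans)

lemma schauder_const_nonneg: "0 \<le> schauder_const Xs"
  using onorm_pos_le[OF bounded_linear_psum_proj] onorm_psum_proj_le_schauder_const
  by (rule order_trans)

lemma psum_proj_Suc_diff: "psum_proj Xs (Suc n) x - psum_proj Xs n x = coord Xs (Suc n) x"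
  by (simp add: psum_proj_def)

lemma onorm_multiplier_le:
  assumes D: "bounded_linear D"
    and D_eigen: "\<And>n y. n \<ge> 1 \<Longrightarrow> y \<in> Xs n \<Longrightarrow> D y = c n *\<^sub>R y"
    and variation: "\<forall>\<^sub>F M in sequentially. \<bar>c M\<bar> + (\<Sum>n\<in>{1..<M}. \<bar>c (Suc n) - c n\<bar>) \<le> V"
  shows "onorm D \<le> V * schauder_const Xs"
proof -
  have D_psum_proj: "D (psum_proj Xs M x)
      = (\<Sum>n<M. c (Suc n) *\<^sub>R (psum_proj Xs (Suc n) x - psum_proj Xs n x))" for M x
  proof -
    have "D (psum_proj Xs M x) = (\<Sum>n\<in>{1..M}. c n *\<^sub>R coord Xs n x)"
      unfolding psum_proj_def linear_sum[OF bounded_linear.linear[OF D]]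
      by (intro sum.cong refl) (simp add: D_eigen coord_in_component)
    also have "\<dots> = (\<Sum>n<M. c (Suc n) *\<^sub>R coord Xs (Suc n) x)"
      by (rule sum_bounds_lt_plus1[symmetric])
    finally show ?thesis by (simp only: psum_proj_Suc_diff)
  qed
  obtain M0 where "\<bar>c M0\<bar> + (\<Sum>n\<in>{1..<M0}. \<bar>c (Suc n) - c n\<bar>) \<le> V"
    using eventually_happens'[OF sequentially_bot variation] by blast
  moreover have "0 \<le> \<bar>c M0\<bar> + (\<Sum>n\<in>{1..<M0}. \<bar>c (Suc n) - c n\<bar>)"
    by (intro add_nonneg_nonneg sum_nonneg) auto
  ultimately have V_nonneg: "0 \<le> V" by linarith
  have "norm (D x) \<le> V * schauder_const Xs * norm x" for x
  proof (rule tendsto_upperbound)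
    show "(\<lambda>M. norm (D (psum_proj Xs M x))) \<longlonglongrightarrow> norm (D x)"
      by (intro tendsto_norm bounded_linear.tendsto[OF D] psum_proj_tendsto)
    show "\<forall>\<^sub>F M in sequentially. norm (D (psum_proj Xs M x)) \<le> V * schauder_const Xs * norm x"
      using variation
    proof eventually_elim
      case (elim M)
      have "norm (D (psum_proj Xs M x))
          \<le> (\<bar>c M\<bar> + (\<Sum>n\<in>{1..<M}. \<bar>c (Suc n) - c n\<bar>)) * (schauder_const Xs * norm x)"
        unfolding D_psum_proj
        by (rule norm_sum_by_parts_le[OF _ norm_psum_proj_le]) (simp add: psum_proj_def)
      also have "\<dots> \<le> V * (schauder_const Xs * norm x)"
        using elim schauder_const_nonneg by (intro mult_right_mono) auto
      finally show ?case by (simp add: mult.assoc)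
    qed
  qed simp
  then show ?thesis
    using V_nonneg schauder_const_nonneg by (intro onorm_bound) auto
qed

end

lemma Suc_mult_fact_cube_div_le:
  "real (Suc N) * fact (Suc N) ^ 3 / fact (Suc (Suc N)) ^ 3 \<le> inverse (real (Suc N) ^ 2)"
proof -
  have "real (Suc N) * fact (Suc N) ^ 3 / fact (Suc (Suc N)) ^ 3 = real (Suc N) / real (Suc (Suc N)) ^ 3"
    by (simp add: power_mult_distrib)
  also have "\<dots> \<le> real (Suc N) / real (Suc N) ^ 3"
    by (intro divide_left_mono power_mono mult_pos_pos) auto
  also have "\<dots> = inverse (real (Suc N) ^ 2)"
    using of_nat_0_less_iff[of "Suc N", where 'a = real] zero_less_Suc
    by (simp only: power3_eq_cube power2_eq_square) (simp add: field_simps del: of_nat_Suc)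
  finally show ?thesis .
qed

locale schauder_diagonal = schauder +
  fixes a :: "nat \<Rightarrow> real" and Ainv :: "'a::complex_banach \<Rightarrow> 'a"
  assumes a_pos: "\<forall>n\<ge>1. a n > 0"
    and a_mono: "\<forall>n\<ge>1. a n \<le> a (Suc n)"
    and Ainv_bdd: "bounded_linear Ainv"
    and Ainv_sums: "\<forall>x. ((\<lambda>n. if n \<ge> 1 then (1 / a n) *\<^sub>R coord Xs n x else 0) sums Ainv x)"
begin

lemma Ainv_of_mem:
  assumes "n \<ge> 1" and "y \<in> Xs n"
  shows "Ainv y = (1 / a n) *\<^sub>R y"
proof -
  have "(\<lambda>m. if m \<ge> 1 then (1 / a m) *\<^sub>R coord Xs m y else 0)
      = (\<lambda>m. if m = n then (1 / a n) *\<^sub>R y else 0)"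
    using assms by (intro ext) (simp add: coord_of_mem)
  then have "(\<lambda>m. if m = n then (1 / a n) *\<^sub>R y else 0) sums Ainv y"
    using Ainv_sums by metis
  moreover have "(\<lambda>m. if m = n then (1 / a n) *\<^sub>R y else 0) sums ((1 / a n) *\<^sub>R y)"
    using sums_single[of n "\<lambda>_. (1 / a n) *\<^sub>R y"] .
  ultimately show ?thesis by (rule sums_unique2)
qed

lemma bounded_linear_exponent: "bounded_linear (\<lambda>y. - (t *\<^sub>R Ainv y))"
  by (intro bounded_linear_minus bounded_linear_compose[OF bounded_linear_scaleR_right Ainv_bdd])

lemma op_exp_of_mem:
  "n \<ge> 1 \<Longrightarrow> y \<in> Xs n \<Longrightarrow> op_exp (\<lambda>y. - (t *\<^sub>R Ainv y)) y = exp (- t / a n) *\<^sub>R y"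
  by (rule op_exp_eigenvector[OF bounded_linear_exponent]) (simp add: Ainv_of_mem)

theorem onorm_exp_minus_tail_le:
  assumes t: "t > 0" and N: "N \<ge> 1"
  shows "onorm (\<lambda>x. op_exp (\<lambda>y. - (t *\<^sub>R Ainv y)) x - (x - psum_proj Xs N x))
           \<le> 2 * (1 + schauder_const Xs) * (exp (- t / a N) + 1 - exp (- t / a (Suc N)))"
proof -
  define e where "e n = exp (- t / a n)" for n
  define c where "c n = e n - (if N < n then 1 else 0)" for n
  define V where "V = 2 * (e N + 1 - e (Suc N))"
  have e_mono: "e n \<le> e (Suc n)" if "n \<ge> 1" for n
  proof -
    have "t / a (Suc n) \<le> t / a n"
      using that a_pos a_mono t by (intro divide_left_mono) auto
    then show ?thesis unfolding e_def by simp
  qed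
  have e_range: "0 \<le> e n \<and> e n \<le> 1" if "n \<ge> 1" for n
    using that a_pos t unfolding e_def by auto
  have "onorm (\<lambda>x. op_exp (\<lambda>y. - (t *\<^sub>R Ainv y)) x - (x - psum_proj Xs N x))
      \<le> V * schauder_const Xs"
  proof (rule onorm_multiplier_le)
    show "bounded_linear (\<lambda>x. op_exp (\<lambda>y. - (t *\<^sub>R Ainv y)) x - (x - psum_proj Xs N x))"
      by (intro bounded_linear_sub bounded_linear_ident bounded_linear_psum_proj
          bounded_linear_op_exp bounded_linear_exponent)
    show "op_exp (\<lambda>y. - (t *\<^sub>R Ainv y)) y - (y - psum_proj Xs N y) = c n *\<^sub>R y"
      if "n \<ge> 1" "y \<in> Xs n" for n y
      using that by (simp add: op_exp_of_mem psum_proj_of_mem c_def e_def algebra_simps)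
    show "\<forall>\<^sub>F M in sequentially. \<bar>c M\<bar> + (\<Sum>n\<in>{1..<M}. \<bar>c (Suc n) - c n\<bar>) \<le> V"
      using eventually_gt_at_top[of N] unfolding V_def
      by eventually_elim (rule variation_of_step_down_le[OF e_mono e_range c_def N])
  qed
  also have "\<dots> \<le> V * (1 + schauder_const Xs)"
    using e_range[OF N] e_range[of "Suc N"] unfolding V_def by (intro mult_left_mono) auto
  finally show ?thesis unfolding V_def e_def by (simp only: mult_ac)
qed

lemma summable_onorm_exp_minus_tail_factorial_cube:
  assumes a_fact: "\<forall>n\<ge>1. a n = fact n ^ 3"
  shows "summable (\<lambda>N. onorm (\<lambda>x. op_exp (\<lambda>y. - ((real (Suc N) * fact (Suc N) ^ 3) *\<^sub>R Ainv y)) x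
                                   - (x - psum_proj Xs (Suc N) x)))"
proof (rule summable_comparison_test')
  let ?K = "schauder_const Xs"
  have "summable (\<lambda>N. exp (-1::real) ^ Suc N)"
    by (subst summable_Suc_iff) (rule summable_geometric, simp)
  moreover have "summable (\<lambda>N. inverse (real (Suc N) ^ 2))"
    by (subst summable_Suc_iff) (rule inverse_power_summable, simp)
  ultimately show "summable (\<lambda>N. 2 * (1 + ?K) * (exp (-1) ^ Suc N + inverse (real (Suc N) ^ 2)))"
    by (intro summable_mult summable_add)
  fix N :: nat
  define t where "t = real (Suc N) * fact (Suc N) ^ 3"
  have "- t / a (Suc N) = real (Suc N) * (-1)"
    using a_fact unfolding t_def by simp
  then have first: "exp (- t / a (Suc N)) = exp (-1) ^ Suc N"
    by (simp only: exp_of_nat_mult)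
  have "1 - exp (- t / a (Suc (Suc N))) \<le> t / a (Suc (Suc N))"
    using exp_ge_add_one_self[of "- t / a (Suc (Suc N))"] by simp
  also have "\<dots> \<le> inverse (real (Suc N) ^ 2)"
    using a_fact Suc_mult_fact_cube_div_le[of N] unfolding t_def by simp
  finally have second: "1 - exp (- t / a (Suc (Suc N))) \<le> inverse (real (Suc N) ^ 2)" .
  have "onorm (\<lambda>x. op_exp (\<lambda>y. - (t *\<^sub>R Ainv y)) x - (x - psum_proj Xs (Suc N) x))
      \<le> 2 * (1 + ?K) * (exp (- t / a (Suc N)) + 1 - exp (- t / a (Suc (Suc N))))"
    by (rule onorm_exp_minus_tail_le) (simp_all add: t_def)
  also have "\<dots> \<le> 2 * (1 + ?K) * (exp (-1) ^ Suc N + inverse (real (Suc N) ^ 2))"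
    using first second schauder_const_nonneg by (intro mult_left_mono) auto
  finally have "onorm (\<lambda>x. op_exp (\<lambda>y. - (t *\<^sub>R Ainv y)) x - (x - psum_proj Xs (Suc N) x))
      \<le> 2 * (1 + ?K) * (exp (-1) ^ Suc N + inverse (real (Suc N) ^ 2))" .
  moreover have "0 \<le> onorm (\<lambda>x. op_exp (\<lambda>y. - (t *\<^sub>R Ainv y)) x - (x - psum_proj Xs (Suc N) x))"
    by (intro onorm_pos_le bounded_linear_sub bounded_linear_ident bounded_linear_psum_proj
        bounded_linear_op_exp bounded_linear_exponent)
  ultimately show "norm (onorm (\<lambda>x. op_exp (\<lambda>y. - ((real (Suc N) * fact (Suc N) ^ 3) *\<^sub>R Ainv y)) x
                                   - (x - psum_proj Xs (Suc N) x)))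
      \<le> 2 * (1 + ?K) * (exp (-1) ^ Suc N + inverse (real (Suc N) ^ 2))"
    unfolding t_def by simp
qed

end

theorem mainTheorem8:
  fixes Xs :: "nat \<Rightarrow> 'a::complex_banach set"
    and a :: "nat \<Rightarrow> real"
    and Ainv :: "'a \<Rightarrow> 'a"
  assumes decomp: "schauder_decomposition Xs"
    and a_pos: "\<forall>n\<ge>1. a n > 0"
    and a_mono: "\<forall>n\<ge>1. a n \<le> a (Suc n)"
    and a_lim: "filterlim a at_top sequentially"
    and Ainv_bdd: "bounded_linear Ainv"
    and Ainv_def: "\<forall>x. ((\<lambda>n. if n \<ge> 1 then (1 / a n) *\<^sub>R coord Xs n x else 0) sums Ainv x)"
  shows "(\<forall>t>0. \<forall>N\<ge>1.
            onorm (\<lambda>x. op_exp (\<lambda>y. - (t *\<^sub>R Ainv y)) x - (x - psum_proj Xs N x))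
            \<le> 2 * (1 + (SUP M\<in>{1..}. onorm (psum_proj Xs M)))
                * (exp (- t / a N) + 1 - exp (- t / a (Suc N))))
      \<and> ((\<forall>n\<ge>1. a n = fact n ^ 3) \<longrightarrow>
           summable (\<lambda>N. onorm (\<lambda>x. op_exp (\<lambda>y. - ((real (Suc N) * fact (Suc N) ^ 3) *\<^sub>R Ainv y)) x
                                     - (x - psum_proj Xs (Suc N) x))))"
proof -
  interpret schauder_diagonal Xs a Ainv
    by (intro schauder_diagonal.intro schauder.intro schauder_diagonal_axioms.intro
        decomp a_pos a_mono Ainv_bdd Ainv_def)
  show ?thesis
    using onorm_exp_minus_tail_le summable_onorm_exp_minus_tail_factorial_cube
    unfolding schauder_const_def by blast
qed

end
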